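(* For every $\epsilon$ with $0<\epsilon<1/4$ and every integer $k\ge 1$, $$R(K_4^*,k)\le (1+\epsilon)^k\epsilon^{-1}k!.$$ In particular, $R(K_4^*,k)\le (k-1)e(1+o(1))k!$ as $k\to\infty$.
   Context: For a family $\mathcal{G}$ of graphs, $R(\mathcal{G},k)$ is the smallest $n$ such that every coloring of the edges of $K_n$ with $k$ colors contains a monochromatic subgraph isomorphic to some member of $\mathcal{G}$. $K_4^*$ is the family of graphs consisting of: $K_4$; the graph obtained from $K_4$ minus an edge by attaching a pendant edge at one of its two vertices of degree $2$; and the triangle with a pendant edge attached at each of its three vertices. (Equivalently, for a vertex $v$ of $K_4$ with neighbors $q_1,q_2,q_3$, $K_4^*$ is the family of graphs obtained from the triangle $K_4-v$ by adding, for each $i$, an edge $q_ir_i$ not in the triangle, with $r_i$ a vertex of the triangle or a new vertex, new vertices possibly shared, the three added edges pairwise distinct.) *)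

theory Defs
  imports Complex_Main
begin

text \<open>A pattern graph is given by a number m of vertices {0..<m} and a list of edges.\<close>
type_synonym pattern = "nat \<times> (nat \<times> nat) list"

definition edge_colouring :: "nat \<Rightarrow> nat \<Rightarrow> (nat \<Rightarrow> nat \<Rightarrow> nat) \<Rightarrow> bool" where
  "edge_colouring n k c \<longleftrightarrow>
     (\<forall>u<n. \<forall>v<n. u \<noteq> v \<longrightarrow> c u v = c v u \<and> c u v < k)"

definition mono_copy :: "nat \<Rightarrow> (nat \<Rightarrow> nat \<Rightarrow> nat) \<Rightarrow> pattern \<Rightarrow> bool" where
  "mono_copy n c H \<longleftrightarrow>
     (\<exists>f col. inj_on f {..<fst H} \<and> f ` {..<fst H} \<subseteq> {..<n} \<and>
        (\<forall>(a,b) \<in> set (snd H). c (f a) (f b) = col))"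

definition ramsey_family :: "pattern set \<Rightarrow> nat \<Rightarrow> nat" where
  "ramsey_family \<G> k = (LEAST n. \<forall>c. edge_colouring n k c \<longrightarrow> (\<exists>H\<in>\<G>. mono_copy n c H))"

definition K4 :: pattern where
  "K4 = (4, [(0,1),(0,2),(0,3),(1,2),(1,3),(2,3)])"

text \<open>K_4 minus the edge 23, with a pendant edge 24 at the degree-2 vertex 2.\<close>
definition K4_minus_pendant :: pattern where
  "K4_minus_pendant = (5, [(0,1),(0,2),(0,3),(1,2),(1,3),(2,4)])"

text \<open>Triangle 012 with pendant edges 03, 14, 25.\<close>
definition triangle_three_pendants :: pattern where
  "triangle_three_pendants = (6, [(0,1),(1,2),(0,2),(0,3),(1,4),(2,5)])"

definition K4_star :: "pattern set" where
  "K4_star = {K4, K4_minus_pendant, triangle_three_pendants}"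

end

theory Submission
  imports Defs
begin

text \<open>Fix a k-colouring of K_n with no monochromatic member of K_4^*, and call a colour-i
  neighbour of v thin if its own colour-i degree is exactly 2. If v has at least three colour-i
  neighbours, no two non-thin ones a, b are joined in colour i: the triangle v a b together with a
  further colour-i neighbour of each of v, a, b would be a monochromatic member of K_4^*. Hence the
  non-thin colour-i neighbours of v span a clique coloured with k - 1 colours, so there are fewer than
  m = R(K_4^*, k - 1) of them. A vertex is thin for at most two vertices in each colour, so some v has
  at most 2k thin neighbours in total, and n - 1 \<le> k (m - 1) + 2k. This gives
  R(K_4^*, k) \<le> k R(K_4^*, k - 1) + k + 2 with R(K_4^*, 1) = 4, a recursion dominated by
  (1 + \<epsilon>)^k \<epsilon>^-1 k!.\<close>

lemma ex_not_in_pair: "2 < card A \<Longrightarrow> \<exists>p\<in>A. p \<noteq> x \<and> p \<noteq> y"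
proof (rule ccontr)
  assume "2 < card A" "\<not> (\<exists>p\<in>A. p \<noteq> x \<and> p \<noteq> y)"
  then have "card A \<le> card {x, y}" by (intro card_mono) auto
  also have "\<dots> \<le> 2" by (simp add: card_insert_if)
  finally show False using \<open>2 < card A\<close> by simp
qed

lemma ex_le_of_sum_le:
  fixes f :: "'a \<Rightarrow> nat"
  assumes "finite A" "A \<noteq> {}" "sum f A \<le> card A * b"
  shows "\<exists>a\<in>A. f a \<le> b"
proof (rule ccontr)
  assume "\<not> (\<exists>a\<in>A. f a \<le> b)"
  then have "(\<Sum>a\<in>A. b) < sum f A" using assms(1,2) by (intro sum_strict_mono) (auto simp: not_le)
  then show False using assms(3) by simp
qed

definition arrows :: "pattern set \<Rightarrow> nat \<Rightarrow> nat \<Rightarrow> bool" where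
  "arrows \<G> n k \<longleftrightarrow> (\<forall>c. edge_colouring n k c \<longrightarrow> (\<exists>H\<in>\<G>. mono_copy n c H))"

lemma ramsey_family_le: "arrows \<G> n k \<Longrightarrow> ramsey_family \<G> k \<le> n"
  unfolding ramsey_family_def arrows_def by (rule Least_le)

definition wf_pattern :: "pattern \<Rightarrow> bool" where
  "wf_pattern H \<longleftrightarrow> (\<forall>(a,b) \<in> set (snd H). a \<noteq> b \<and> a < fst H \<and> b < fst H)"

lemma wf_pattern_K4_star: "H \<in> K4_star \<Longrightarrow> wf_pattern H"
  by (auto simp: K4_star_def K4_def K4_minus_pendant_def triangle_three_pendants_def wf_pattern_def)

lemma mono_copyI:
  assumes "distinct xs" "set xs \<subseteq> {..<n}" "fst H = length xs"
    and "\<forall>(a,b) \<in> set (snd H). c (xs!a) (xs!b) = col"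
  shows "mono_copy n c H"
  unfolding mono_copy_def
proof (intro exI conjI)
  show "inj_on (nth xs) {..<fst H}" using assms by (simp add: inj_on_nth)
  show "nth xs ` {..<fst H} \<subseteq> {..<n}" using assms nth_mem by fastforce
qed (fact assms(4))

lemma mono_copy_pullback:
  assumes H: "wf_pattern H" "mono_copy m c' H"
    and g: "inj_on g {..<m}" "g ` {..<m} \<subseteq> {..<n}"
    and recolour: "\<And>u w. u < m \<Longrightarrow> w < m \<Longrightarrow> u \<noteq> w \<Longrightarrow> c (g u) (g w) = \<phi> (c' u w)"
  shows "mono_copy n c H"
proof -
  obtain f col where f: "inj_on f {..<fst H}" "f ` {..<fst H} \<subseteq> {..<m}"
    and mono: "\<forall>(a,b) \<in> set (snd H). c' (f a) (f b) = col"
    using H(2) unfolding mono_copy_def by blast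
  show ?thesis
    unfolding mono_copy_def
  proof (intro exI conjI)
    show "inj_on (g \<circ> f) {..<fst H}" using f g(1) by (meson comp_inj_on inj_on_subset)
    show "(g \<circ> f) ` {..<fst H} \<subseteq> {..<n}" using f(2) g(2) by auto
    show "\<forall>(a,b) \<in> set (snd H). c ((g \<circ> f) a) ((g \<circ> f) b) = \<phi> col"
    proof clarify
      fix a b assume ab: "(a,b) \<in> set (snd H)"
      then have "a \<noteq> b" "a < fst H" "b < fst H" using H(1) by (auto simp: wf_pattern_def)
      then have "f a < m" "f b < m" "f a \<noteq> f b" using f by (auto dest: inj_onD)
      then show "c ((g \<circ> f) a) ((g \<circ> f) b) = \<phi> col" using recolour mono ab by auto
    qed
  qed
qed

lemma arrows_on_colour_free_set:
  assumes arrows: "arrows \<G> m (k - 1)" and wf: "\<forall>H\<in>\<G>. wf_pattern H"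
    and c: "edge_colouring n k c" and "i < k"
    and S: "S \<subseteq> {..<n}" "m \<le> card S"
    and free: "\<forall>a\<in>S. \<forall>b\<in>S. a \<noteq> b \<longrightarrow> c a b \<noteq> i"
  shows "\<exists>H\<in>\<G>. mono_copy n c H"
proof -
  have "finite S" using S(1) finite_subset by blast
  then obtain g where g: "g ` {..<m} \<subseteq> S" "inj_on g {..<m}"
    using card_le_inj[of "{..<m}" S] S(2) by auto
  have gn: "g ` {..<m} \<subseteq> {..<n}" using g(1) S(1) by blast
  define c' where "c' u w = (let j = c (g u) (g w) in if j < i then j else j - 1)" for u w
  have no_i: "c (g u) (g w) \<noteq> i" if "u < m" "w < m" "u \<noteq> w" for u w
    using free g that by (auto dest: inj_onD)
  have c_gg: "c (g u) (g w) = (if j < i then j else j + 1)" if "j = c' u w" "u < m" "w < m" "u \<noteq> w"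
    for u w j
    using no_i[OF that(2-4)] that(1) unfolding c'_def Let_def by auto
  have "edge_colouring m (k - 1) c'"
    unfolding edge_colouring_def
  proof (intro allI impI conjI)
    fix u w assume uw: "u < m" "w < m" "u \<noteq> w"
    then have "g u < n" "g w < n" "g u \<noteq> g w" using gn g(2) by (auto dest: inj_onD)
    then have "c (g u) (g w) = c (g w) (g u)" "c (g u) (g w) < k"
      using c by (auto simp: edge_colouring_def)
    then show "c' u w = c' w u" "c' u w < k - 1"
      using no_i[OF uw] \<open>i < k\<close> unfolding c'_def Let_def by auto
  qed
  then obtain H where H: "H \<in> \<G>" "mono_copy m c' H" using arrows unfolding arrows_def by blast
  have "wf_pattern H" using wf H(1) by blast
  then have "mono_copy n c H" using H(2) g(2) gn c_gg[OF refl] by (rule mono_copy_pullback)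
  with H(1) show ?thesis by blast
qed

lemma mono_triangle_with_pendants:
  assumes sym: "\<And>u v. u < n \<Longrightarrow> v < n \<Longrightarrow> u \<noteq> v \<Longrightarrow> c u v = c v u"
    and vertices: "a < n" "b < n" "x < n" "p < n" "q < n" "r < n"
    and distinct: "distinct [a, b, x]" "p \<notin> {a, b, x}" "q \<notin> {a, b, x}" "r \<notin> {a, b, x}"
    and col: "c a b = i" "c a x = i" "c b x = i" "c a p = i" "c b q = i" "c x r = i"
  shows "\<exists>H\<in>K4_star. mono_copy n c H"
proof -
  have col': "c b a = i" "c x a = i" "c x b = i" using sym col vertices distinct by auto
  consider "p = q" "q = r" | "p = q" "q \<noteq> r" | "p \<noteq> q" "p = r" | "p \<noteq> q" "q = r" "p \<noteq> r"
    | "p \<noteq> q" "q \<noteq> r" "p \<noteq> r" by blast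
  then show ?thesis
  proof cases
    case 1
    have "mono_copy n c K4"
      by (rule mono_copyI[of "[a, b, x, p]" _ _ _ i])
         (use vertices distinct col 1 in \<open>auto simp: K4_def\<close>)
    then show ?thesis unfolding K4_star_def by blast
  next
    case 2
    have "mono_copy n c K4_minus_pendant"
      by (rule mono_copyI[of "[a, b, x, p, r]" _ _ _ i])
         (use vertices distinct col 2 in \<open>auto simp: K4_minus_pendant_def\<close>)
    then show ?thesis unfolding K4_star_def by blast
  next
    case 3
    have "mono_copy n c K4_minus_pendant"
      by (rule mono_copyI[of "[a, x, b, p, q]" _ _ _ i])
         (use vertices distinct col col' 3 in \<open>auto simp: K4_minus_pendant_def\<close>)
    then show ?thesis unfolding K4_star_def by blast
  next
    case 4
    have "mono_copy n c K4_minus_pendant"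
      by (rule mono_copyI[of "[b, x, a, q, p]" _ _ _ i])
         (use vertices distinct col col' 4 in \<open>auto simp: K4_minus_pendant_def\<close>)
    then show ?thesis unfolding K4_star_def by blast
  next
    case 5
    have "mono_copy n c triangle_three_pendants"
      by (rule mono_copyI[of "[a, b, x, p, q, r]" _ _ _ i])
         (use vertices distinct col col' 5 in \<open>auto simp: triangle_three_pendants_def\<close>)
    then show ?thesis unfolding K4_star_def by blast
  qed
qed

locale K4_star_free_colouring =
  fixes n k :: nat and c :: "nat \<Rightarrow> nat \<Rightarrow> nat"
  assumes colouring: "edge_colouring n k c"
    and K4_star_free: "\<not> (\<exists>H\<in>K4_star. mono_copy n c H)"
begin

definition nbhd :: "nat \<Rightarrow> nat \<Rightarrow> nat set" where
  "nbhd i v = {u. u < n \<and> u \<noteq> v \<and> c v u = i}"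

definition thin_nbhd :: "nat \<Rightarrow> nat \<Rightarrow> nat set" where
  "thin_nbhd i v = {a \<in> nbhd i v. card (nbhd i a) = 2}"

lemma sym: "u < n \<Longrightarrow> v < n \<Longrightarrow> u \<noteq> v \<Longrightarrow> c u v = c v u"
  using colouring by (simp add: edge_colouring_def)

lemma nbhd_subset: "nbhd i v \<subseteq> {..<n}"
  by (auto simp: nbhd_def)

lemma finite_nbhd [simp]: "finite (nbhd i v)"
  using nbhd_subset finite_subset by blast

lemma mem_nbhd_commute: "u < n \<Longrightarrow> v < n \<Longrightarrow> u \<in> nbhd i v \<longleftrightarrow> v \<in> nbhd i u"
  using sym by (auto simp: nbhd_def)

lemma thin_nbhd_subset: "thin_nbhd i v \<subseteq> nbhd i v"
  by (auto simp: thin_nbhd_def)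

lemma not_thin_ex_nbr:
  assumes "a \<in> nbhd i v - thin_nbhd i v" "b \<in> nbhd i a" "b \<noteq> v" "v < n"
  shows "\<exists>p\<in>nbhd i a. p \<noteq> v \<and> p \<noteq> b"
proof -
  have "a < n" using assms(1) nbhd_subset by auto
  then have "{v, b} \<subseteq> nbhd i a" using assms mem_nbhd_commute[of a v i] by auto
  then have "card {v, b} \<le> card (nbhd i a)" by (intro card_mono) simp_all
  then have "2 \<le> card (nbhd i a)" using \<open>b \<noteq> v\<close> by simp
  moreover have "card (nbhd i a) \<noteq> 2" using assms(1) by (simp add: thin_nbhd_def)
  ultimately show ?thesis by (intro ex_not_in_pair) simp
qed

lemma no_edge_in_thick_nbhd:
  assumes "2 < card (nbhd i v)" "v < n"
    and a: "a \<in> nbhd i v - thin_nbhd i v" and b: "b \<in> nbhd i v - thin_nbhd i v" and "a \<noteq> b"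
  shows "c a b \<noteq> i"
proof
  assume ab: "c a b = i"
  have a': "a < n" "a \<noteq> v" "c v a = i" and b': "b < n" "b \<noteq> v" "c v b = i"
    using a b by (auto simp: nbhd_def)
  have "b \<in> nbhd i a" "a \<in> nbhd i b"
    using a' b' ab sym[of b a] \<open>a \<noteq> b\<close> by (auto simp: nbhd_def)
  obtain w where w: "w \<in> nbhd i v" "w \<noteq> a" "w \<noteq> b" using ex_not_in_pair[OF assms(1)] by blast
  obtain p where p: "p \<in> nbhd i a" "p \<noteq> v" "p \<noteq> b"
    using not_thin_ex_nbr[OF a \<open>b \<in> nbhd i a\<close> \<open>b \<noteq> v\<close> \<open>v < n\<close>] by blast
  obtain q where q: "q \<in> nbhd i b" "q \<noteq> v" "q \<noteq> a"
    using not_thin_ex_nbr[OF b \<open>a \<in> nbhd i b\<close> \<open>a \<noteq> v\<close> \<open>v < n\<close>] by blast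
  have "w < n" "w \<noteq> v" "c v w = i" using w(1) by (auto simp: nbhd_def)
  moreover have "p < n" "p \<noteq> a" "c a p = i" using p(1) by (auto simp: nbhd_def)
  moreover have "q < n" "q \<noteq> b" "c b q = i" using q(1) by (auto simp: nbhd_def)
  ultimately have "\<exists>H\<in>K4_star. mono_copy n c H"
    using w(2,3) p(2,3) q(2,3) a' b' ab \<open>v < n\<close> \<open>a \<noteq> b\<close>
    by (intro mono_triangle_with_pendants[where a = v and b = a and x = b and p = w and q = p and r = q,
        OF sym]) auto
  then show False using K4_star_free by blast
qed

lemma card_nbhd_le:
  assumes "arrows K4_star m (k - 1)" "3 \<le> m" "v < n" "i < k"
  shows "card (nbhd i v) \<le> m - 1 + card (thin_nbhd i v)"
proof (cases "2 < card (nbhd i v)")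
  case True
  have "card (nbhd i v - thin_nbhd i v) < m"
  proof (rule ccontr)
    assume "\<not> ?thesis"
    then have "m \<le> card (nbhd i v - thin_nbhd i v)" by simp
    moreover have "nbhd i v - thin_nbhd i v \<subseteq> {..<n}" using nbhd_subset by blast
    ultimately have "\<exists>H\<in>K4_star. mono_copy n c H"
      using no_edge_in_thick_nbhd[OF True \<open>v < n\<close>] wf_pattern_K4_star
      by (intro arrows_on_colour_free_set[OF assms(1) _ colouring \<open>i < k\<close>]) auto
    then show False using K4_star_free by blast
  qed
  moreover have "card (nbhd i v) \<le> card (nbhd i v - thin_nbhd i v) + card (thin_nbhd i v)"
    by (metis Diff_partition thin_nbhd_subset Un_commute card_Un_le)
  ultimately show ?thesis by linarith
next
  case False
  then show ?thesis using \<open>3 \<le> m\<close> by linarith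
qed

lemma card_minus_one_le_sum_card_nbhd:
  assumes "v < n" shows "n - 1 \<le> (\<Sum>i<k. card (nbhd i v))"
proof -
  have "{..<n} - {v} \<subseteq> (\<Union>i<k. nbhd i v)"
    using colouring assms by (auto simp: nbhd_def edge_colouring_def)
  then have "card ({..<n} - {v}) \<le> card (\<Union>i<k. nbhd i v)" by (intro card_mono) auto
  also have "\<dots> \<le> (\<Sum>i<k. card (nbhd i v))" by (rule card_UN_le) simp
  finally show ?thesis using assms by simp
qed

lemma sum_card_thin_nbhd_le: "(\<Sum>v<n. card (thin_nbhd i v)) \<le> 2 * n"
proof -
  have "{..<n} \<inter> {a. a \<in> thin_nbhd i v} = thin_nbhd i v" for v
    using thin_nbhd_subset nbhd_subset by blast
  then have "(\<Sum>v<n. card (thin_nbhd i v)) = (\<Sum>v<n. \<Sum>a<n. of_bool (a \<in> thin_nbhd i v))"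
    by simp
  also have "\<dots> = (\<Sum>a<n. \<Sum>v<n. of_bool (a \<in> thin_nbhd i v))" by (rule sum.swap)
  also have "\<dots> \<le> (\<Sum>a<n. 2)"
  proof (rule sum_mono)
    fix a assume "a \<in> {..<n}"
    have "card ({..<n} \<inter> {v. a \<in> thin_nbhd i v}) \<le> 2"
    proof (cases "card (nbhd i a) = 2")
      case True
      have "{..<n} \<inter> {v. a \<in> thin_nbhd i v} \<subseteq> nbhd i a"
        using mem_nbhd_commute[of a _ i] thin_nbhd_subset \<open>a \<in> {..<n}\<close> by blast
      then show ?thesis using card_mono[OF finite_nbhd] True by metis
    next
      case False
      then show ?thesis by (simp add: thin_nbhd_def)
    qed
    then show "(\<Sum>v<n. of_bool (a \<in> thin_nbhd i v)) \<le> (2::nat)" by simp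
  qed
  finally show ?thesis by simp
qed

lemma size_le:
  assumes "arrows K4_star m (k - 1)" "3 \<le> m"
  shows "n \<le> k * m + k + 1"
proof (cases "n = 0")
  case False
  have "(\<Sum>v<n. \<Sum>i<k. card (thin_nbhd i v)) = (\<Sum>i<k. \<Sum>v<n. card (thin_nbhd i v))"
    by (rule sum.swap)
  also have "\<dots> \<le> (\<Sum>i<k. 2 * n)" by (intro sum_mono sum_card_thin_nbhd_le)
  also have "\<dots> = card {..<n} * (2 * k)" by simp
  finally obtain v where "v < n" and thin: "(\<Sum>i<k. card (thin_nbhd i v)) \<le> 2 * k"
    using ex_le_of_sum_le[of "{..<n}"] False by blast
  have "n - 1 \<le> (\<Sum>i<k. card (nbhd i v))" by (rule card_minus_one_le_sum_card_nbhd[OF \<open>v < n\<close>])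
  also have "\<dots> \<le> (\<Sum>i<k. m - 1 + card (thin_nbhd i v))"
    using card_nbhd_le[OF assms \<open>v < n\<close>] by (intro sum_mono) simp
  also have "\<dots> \<le> k * (m - 1) + 2 * k" using thin by (simp add: sum.distrib)
  finally show ?thesis using \<open>3 \<le> m\<close> by (simp add: diff_mult_distrib2)
qed simp

end

lemma arrows_K4_star_step:
  assumes "arrows K4_star m (k - 1)" "3 \<le> m"
  shows "arrows K4_star (k * m + k + 2) k"
  unfolding arrows_def
proof (intro allI impI, rule ccontr)
  fix c
  assume "edge_colouring (k * m + k + 2) k c" "\<not> (\<exists>H\<in>K4_star. mono_copy (k * m + k + 2) c H)"
  then interpret K4_star_free_colouring "k * m + k + 2" k c by unfold_locales
  show False using size_le[OF assms] by simp
qed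

lemma arrows_K4_star_one: "arrows K4_star 4 1"
  unfolding arrows_def
proof (intro allI impI)
  fix c assume "edge_colouring 4 1 c"
  then have "mono_copy 4 c K4"
    by (intro mono_copyI[of "[0, 1, 2, 3]" _ _ _ 0]) (auto simp: K4_def edge_colouring_def)
  then show "\<exists>H\<in>K4_star. mono_copy 4 c H" by (auto simp: K4_star_def)
qed

lemma factorial_bound_step:
  fixes \<epsilon> :: real
  assumes "0 < \<epsilon>" "2 \<le> k" and b: "real b \<le> (1 + \<epsilon>) ^ k * inverse \<epsilon> * fact k"
  shows "real (Suc k * b + Suc k + 2) \<le> (1 + \<epsilon>) ^ Suc k * inverse \<epsilon> * fact (Suc k)"
proof -
  define F where "F = (1 + \<epsilon>) ^ k * inverse \<epsilon> * fact k"
  have "(2::real) \<le> fact k"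
    using fact_mono[OF \<open>2 \<le> k\<close>, where 'a = real] by simp
  moreover have "1 \<le> (1 + \<epsilon>) ^ k" using \<open>0 < \<epsilon>\<close> by simp
  ultimately have "2 \<le> (1 + \<epsilon>) ^ k * fact k" using mult_mono[of 1 _ 2] by fastforce
  then have two_le: "2 \<le> \<epsilon> * F" unfolding F_def using \<open>0 < \<epsilon>\<close> by (simp add: field_simps)
  have "real (Suc k) * real b \<le> real (Suc k) * F"
    using b unfolding F_def by (intro mult_left_mono) simp_all
  moreover have "real (Suc k) + 2 \<le> real (Suc k) * 2" using \<open>2 \<le> k\<close> by simp
  ultimately have "real (Suc k * b + Suc k + 2) \<le> real (Suc k) * F + real (Suc k) * 2"
    by (simp add: algebra_simps)
  also have "\<dots> \<le> real (Suc k) * F + real (Suc k) * (\<epsilon> * F)"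
    using two_le by (intro add_left_mono mult_left_mono) auto
  also have "\<dots> = (1 + \<epsilon>) ^ Suc k * inverse \<epsilon> * fact (Suc k)"
    unfolding F_def by (simp add: algebra_simps)
  finally show ?thesis .
qed

fun K4_star_bound :: "nat \<Rightarrow> nat" where
  "K4_star_bound 0 = 0"
| "K4_star_bound (Suc 0) = 4"
| "K4_star_bound (Suc (Suc k)) = Suc (Suc k) * K4_star_bound (Suc k) + Suc (Suc k) + 2"

lemma arrows_K4_star_bound: "1 \<le> k \<Longrightarrow> arrows K4_star (K4_star_bound k) k \<and> 4 \<le> K4_star_bound k"
proof (induction k rule: K4_star_bound.induct)
  case (3 k)
  then have "arrows K4_star (Suc (Suc k) * K4_star_bound (Suc k) + Suc (Suc k) + 2) (Suc (Suc k))"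
    by (intro arrows_K4_star_step) auto
  then show ?case by simp
qed (use arrows_K4_star_one in simp_all)

lemma K4_star_bound_le:
  fixes \<epsilon> :: real
  assumes "0 < \<epsilon>" "\<epsilon> < 1/4" "1 \<le> k"
  shows "real (K4_star_bound k) \<le> (1 + \<epsilon>) ^ k * inverse \<epsilon> * fact k"
  using \<open>1 \<le> k\<close>
proof (induction k rule: K4_star_bound.induct)
  case 2
  have "4 \<le> inverse \<epsilon>" using assms by (simp add: field_simps)
  also have "\<dots> \<le> (1 + \<epsilon>) * inverse \<epsilon>" using assms by (simp add: field_simps)
  finally show ?case by simp
next
  case (3 j)
  show ?case
  proof (cases j)
    case 0
    have "12 * \<epsilon> \<le> 2 * (1 + 2 * \<epsilon>)" using assms by simp
    also have "\<dots> \<le> 2 * (1 + \<epsilon>)\<^sup>2" by (simp add: power2_eq_square algebra_simps)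
    finally have "12 \<le> (1 + \<epsilon>)\<^sup>2 * inverse \<epsilon> * 2" using assms by (simp add: field_simps)
    then show ?thesis using 0 by (simp add: numeral_eq_Suc)
  next
    case (Suc j')
    then have "real (K4_star_bound (Suc j)) \<le> (1 + \<epsilon>) ^ Suc j * inverse \<epsilon> * fact (Suc j)"
      using 3 by simp
    from factorial_bound_step[OF assms(1) _ this] Suc show ?thesis by simp
  qed
qed simp

lemma tendsto_one_plus_inverse_pred_power: "(\<lambda>k. (1 + 1 / (real k - 1)) ^ k) \<longlonglongrightarrow> exp 1"
proof -
  have "(\<lambda>n. (1 + 1 / real n) ^ n * (1 + 1 / real n)) \<longlonglongrightarrow> exp 1 * (1 + 0)"
    by (intro tendsto_intros tendsto_exp_limit_sequentially)
  then have "(\<lambda>n. (1 + 1 / (real (Suc n) - 1)) ^ Suc n) \<longlonglongrightarrow> exp 1"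
    by (simp add: mult.commute)
  then show ?thesis by (rule LIMSEQ_imp_Suc)
qed

lemma ramsey_K4_star_le:
  fixes \<epsilon> :: real
  assumes "0 < \<epsilon>" "\<epsilon> < 1/4" "1 \<le> k"
  shows "real (ramsey_family K4_star k) \<le> (1 + \<epsilon>) ^ k * inverse \<epsilon> * fact k"
proof -
  have "ramsey_family K4_star k \<le> K4_star_bound k"
    using arrows_K4_star_bound[OF \<open>1 \<le> k\<close>] by (intro ramsey_family_le) simp
  then show ?thesis using K4_star_bound_le[OF assms] by linarith
qed

lemma ramsey_K4_star_le_pred:
  assumes "6 \<le> k"
  shows "real (ramsey_family K4_star k) \<le> (real k - 1) * (1 + 1 / (real k - 1)) ^ k * fact k"
proof -
  define \<epsilon> where "\<epsilon> = 1 / (real k - 1)"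
  have "0 < \<epsilon>" "\<epsilon> < 1/4" using assms by (auto simp: \<epsilon>_def field_simps)
  with assms have "real (ramsey_family K4_star k) \<le> (1 + \<epsilon>) ^ k * inverse \<epsilon> * fact k"
    by (intro ramsey_K4_star_le) auto
  then show ?thesis by (simp add: \<epsilon>_def mult.commute)
qed

theorem lemma1:
  shows "(\<forall>(\<epsilon>::real) (k::nat). 0 < \<epsilon> \<and> \<epsilon> < 1/4 \<and> k \<ge> 1 \<longrightarrow>
            real (ramsey_family K4_star k) \<le> (1 + \<epsilon>) ^ k * inverse \<epsilon> * fact k)
       \<and> (\<exists>g :: nat \<Rightarrow> real. g \<longlonglongrightarrow> 0 \<and>
            (\<forall>\<^sub>F k in sequentially.
               real (ramsey_family K4_star k) \<le> (real k - 1) * exp 1 * (1 + g k) * fact k))"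
proof -
  define g where "g k = (1 + 1 / (real k - 1)) ^ k / exp 1 - 1" for k :: nat
  have "g \<longlonglongrightarrow> exp 1 / exp 1 - 1"
    unfolding g_def by (intro tendsto_intros tendsto_one_plus_inverse_pred_power) simp
  then have "g \<longlonglongrightarrow> 0" by simp
  moreover have "\<forall>\<^sub>F k in sequentially.
      real (ramsey_family K4_star k) \<le> (real k - 1) * exp 1 * (1 + g k) * fact k"
    using ramsey_K4_star_le_pred by (intro eventually_sequentiallyI) (simp add: g_def)
  ultimately show ?thesis using ramsey_K4_star_le by blast
qed

end
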